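(* Let $n \in\mathbb N$ and $F\colon\mathbb R_+^n\to \mathbb R_+$ with $F\in P_{MB}^n$. Then $F$ is quasi-subadditive, i.e. there exists $s\geqslant1$ with $F(\mathbf a+\mathbf b)\leqslant s(F(\mathbf a)+F(\mathbf b))$ for all $\mathbf a,\mathbf b\in\mathbb R_+^n$.
   Context: $\mathbb R_+=[0,\infty)$; $\mathbf a+\mathbf b$ is the coordinatewise sum. A b-metric on $X$ is $d\colon X^2\to\mathbb R_+$ with $d(x,y)=0\iff x=y$, $d(x,y)=d(y,x)$, and for some $K\geqslant1$, $d(x,z)\leqslant K(d(x,y)+d(y,z))$ for all $x,y,z$; a metric is a b-metric with $K=1$. $P^n_{MB}$ is the set of $F\colon\mathbb R_+^n\to\mathbb R_+$ such that for every collection of metric spaces $(X_i,d_i)$, $i=1,\dots,n$, the function $D(\mathbf x,\mathbf y)=F(d_1(x_1,y_1),\dots,d_n(x_n,y_n))$ on $\prod_{i=1}^nX_i$ is a b-metric. *)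

theory Defs
  imports "HOL-Analysis.Analysis"
begin

definition is_metric_on :: "'a set \<Rightarrow> ('a \<Rightarrow> 'a \<Rightarrow> real) \<Rightarrow> bool" where
  "is_metric_on X d \<longleftrightarrow>
     (\<forall>x\<in>X. \<forall>y\<in>X. d x y \<ge> 0 \<and> (d x y = 0 \<longleftrightarrow> x = y) \<and> d x y = d y x) \<and>
     (\<forall>x\<in>X. \<forall>y\<in>X. \<forall>z\<in>X. d x z \<le> d x y + d y z)"

definition is_bmetric_on :: "'a set \<Rightarrow> ('a \<Rightarrow> 'a \<Rightarrow> real) \<Rightarrow> bool" where
  "is_bmetric_on X d \<longleftrightarrow>
     (\<forall>x\<in>X. \<forall>y\<in>X. d x y \<ge> 0 \<and> (d x y = 0 \<longleftrightarrow> x = y) \<and> d x y = d y x) \<and>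
     (\<exists>K\<ge>1. \<forall>x\<in>X. \<forall>y\<in>X. \<forall>z\<in>X. d x z \<le> K * (d x y + d y z))"

definition nonneg_orthant :: "(real ^ 'n) set" where
  "nonneg_orthant = {a. \<forall>i. a $ i \<ge> 0}"

text \<open>Points of the factor spaces are real numbers (carriers are subsets of real).\<close>
definition P_MB :: "((real ^ 'n) \<Rightarrow> real) \<Rightarrow> bool" where
  "P_MB F \<longleftrightarrow>
     (\<forall>(X :: 'n \<Rightarrow> real set) (d :: 'n \<Rightarrow> real \<Rightarrow> real \<Rightarrow> real).
        (\<forall>i. is_metric_on (X i) (d i)) \<longrightarrow>
        is_bmetric_on {x :: real ^ 'n. \<forall>i. x $ i \<in> X i}
                      (\<lambda>x y. F (\<chi> i. d i (x $ i) (y $ i))))"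

end

theory Submission
  imports Defs
begin

text \<open>Take every factor to be the real line with its usual metric. For a, b in the orthant the
  points 0, a and a + b of the product have coordinatewise distances a + b, a and b, so the
  relaxed triangle inequality of the b-metric D through a is quasi-subadditivity of F.\<close>

lemma is_metric_on_dist: "is_metric_on X (dist :: 'a::metric_space \<Rightarrow> 'a \<Rightarrow> real)"
  unfolding is_metric_on_def by (auto simp: dist_commute dist_triangle)

lemma P_MB_dist_relaxed_triangle:
  fixes F :: "real ^ 'n \<Rightarrow> real"
  assumes "P_MB F"
  obtains K where "K \<ge> 1"
    and "\<And>x y z :: real ^ 'n. F (\<chi> i. dist (x $ i) (z $ i))
                  \<le> K * (F (\<chi> i. dist (x $ i) (y $ i)) + F (\<chi> i. dist (y $ i) (z $ i)))"
proof -
  have "is_bmetric_on UNIV (\<lambda>x y :: real ^ 'n. F (\<chi> i. dist (x $ i) (y $ i)))"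
    using assms unfolding P_MB_def
    by (elim allE[of _ "\<lambda>_. UNIV"] allE[of _ "\<lambda>_. dist"]) (simp add: is_metric_on_dist)
  then show ?thesis
    unfolding is_bmetric_on_def by (elim conjE exE) (rule that; blast)
qed

lemma nonneg_orthant_add: "a \<in> nonneg_orthant \<Longrightarrow> b \<in> nonneg_orthant \<Longrightarrow> a + b \<in> nonneg_orthant"
  unfolding nonneg_orthant_def by simp

lemma dist_translate_nonneg_orthant:
  assumes "a \<in> nonneg_orthant"
  shows "(\<chi> i. dist (x $ i) ((x + a) $ i)) = a"
  using assms unfolding nonneg_orthant_def by (simp add: vec_eq_iff dist_real_def)

theorem lemma3p4:
  fixes F :: "real ^ 'n \<Rightarrow> real"
  assumes "\<forall>a\<in>nonneg_orthant. F a \<ge> 0"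
    and "P_MB F"
  shows "\<exists>s\<ge>1. \<forall>a\<in>nonneg_orthant. \<forall>b\<in>nonneg_orthant. F (a + b) \<le> s * (F a + F b)"
proof -
  obtain K where "K \<ge> 1" and triangle:
    "\<And>x y z :: real ^ 'n. F (\<chi> i. dist (x $ i) (z $ i))
              \<le> K * (F (\<chi> i. dist (x $ i) (y $ i)) + F (\<chi> i. dist (y $ i) (z $ i)))"
    using P_MB_dist_relaxed_triangle[OF assms(2)] by blast
  have "F (a + b) \<le> K * (F a + F b)"
    if a: "a \<in> nonneg_orthant" and b: "b \<in> nonneg_orthant" for a b
  proof -
    have "F (a + b) = F (\<chi> i. dist (0 $ i) ((a + b) $ i))"
      using dist_translate_nonneg_orthant[OF nonneg_orthant_add[OF a b], of 0] by simp
    also have "\<dots> \<le> K * (F (\<chi> i. dist (0 $ i) (a $ i)) + F (\<chi> i. dist (a $ i) ((a + b) $ i)))"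
      by (rule triangle)
    also have "\<dots> = K * (F a + F b)"
      using dist_translate_nonneg_orthant[OF a, of 0] dist_translate_nonneg_orthant[OF b, of a]
      by simp
    finally show ?thesis .
  qed
  with \<open>K \<ge> 1\<close> show ?thesis
    by blast
qed

end
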